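(* Let $k,n\in\mathbb N^+$ and $\mathbf C=(c_0,\dots,c_k)\in\{0,1\}^{k+1}$, $\mathbf C'=(1,\dots,1)-\mathbf C=(c'_0,\dots,c'_k)$. For every integer $m$ with $c_k-1\le m\le n+c_k$, $$O_{\mathbf C}(n,m)=O_{\mathbf C'}(n,n-m),$$ and for every integer $m$ with $0\le m\le n+1$, $$O_{\mathbf C}(n,m+c_k-1)=O_{\mathbf C'}(n,n-m+c'_k).$$
   Context: Consider $k$-tuples $(\pi_1,\dots,\pi_k)$ of permutations of $\{1,\dots,n\}$. A position $\alpha$ is a record of a permutation $\pi$ if $\pi(\alpha)<\pi(\alpha')$ for every $\alpha'<\alpha$ (position $1$ is always a record); equivalently records index the minimal elements of the points $(\alpha,\pi(\alpha))$ under strict componentwise domination. For a tuple, let $l_\alpha$ be the number of $\beta\in\{1,\dots,k\}$ for which $\alpha$ is a record of $\pi_\beta$. For $\mathbf X\in\{0,1\}^{k+1}$, the $\mathbf X$ sequential optimization set of the tuple is $S=\{\alpha:x_{l_\alpha}=1\}$, with weight $|S|$, and for an integer $m$, $O_{\mathbf X}(n,m)$ is the number of $k$-tuples whose weight equals $m$ (so it is $0$ for $m<0$ or $m>n$). *)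

theory Defs
  imports "HOL-Combinatorics.Permutations" "HOL-Library.FuncSet"
begin

definition is_record :: "nat \<Rightarrow> (nat \<Rightarrow> nat) \<Rightarrow> nat \<Rightarrow> bool" where
  "is_record n p a \<longleftrightarrow> a \<in> {1..n} \<and> (\<forall>a'\<in>{1..<a}. p a < p a')"

definition perm_tuples :: "nat \<Rightarrow> nat \<Rightarrow> (nat \<Rightarrow> nat \<Rightarrow> nat) set" where
  "perm_tuples k n = PiE {1..k} (\<lambda>_. {p. p permutes {1..n}})"

definition rec_count :: "nat \<Rightarrow> nat \<Rightarrow> (nat \<Rightarrow> nat \<Rightarrow> nat) \<Rightarrow> nat \<Rightarrow> nat" where
  "rec_count k n ps a = card {b \<in> {1..k}. is_record n (ps b) a}"

text \<open>X sequential optimization set; X : {0..k} -> {0,1} encoded as nat \<Rightarrow> nat.\<close>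
definition seq_opt_set :: "(nat \<Rightarrow> nat) \<Rightarrow> nat \<Rightarrow> nat \<Rightarrow> (nat \<Rightarrow> nat \<Rightarrow> nat) \<Rightarrow> nat set" where
  "seq_opt_set X k n ps = {a \<in> {1..n}. X (rec_count k n ps a) = 1}"

definition O_count :: "(nat \<Rightarrow> nat) \<Rightarrow> nat \<Rightarrow> nat \<Rightarrow> int \<Rightarrow> nat" where
  "O_count X k n m = card {ps \<in> perm_tuples k n. int (card (seq_opt_set X k n ps)) = m}"

end

theory Submission
  imports Defs
begin

text \<open>Replacing the 0/1 vector by its complement replaces the optimization set of every
  tuple by its complement in {1..n}, so weight m corresponds to weight n - m. Hence both
  identities hold for every integer m.\<close>

lemma rec_count_le: "rec_count k n ps a \<le> k"
proof -
  have "rec_count k n ps a \<le> card {1..k}"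
    unfolding rec_count_def by (rule card_mono) auto
  then show ?thesis by simp
qed

lemma seq_opt_set_subset: "seq_opt_set X k n ps \<subseteq> {1..n}"
  unfolding seq_opt_set_def by auto

lemma seq_opt_set_compl:
  assumes "\<forall>i\<in>{0..k}. C i \<in> {0, 1}"
  shows "seq_opt_set (\<lambda>i. 1 - C i) k n ps = {1..n} - seq_opt_set C k n ps"
proof (rule set_eqI)
  fix a
  have "C (rec_count k n ps a) \<in> {0, 1}"
    using assms rec_count_le[of k n ps a] by auto
  then show "a \<in> seq_opt_set (\<lambda>i. 1 - C i) k n ps \<longleftrightarrow> a \<in> {1..n} - seq_opt_set C k n ps"
    unfolding seq_opt_set_def by auto
qed

lemma card_seq_opt_set_compl:
  assumes "\<forall>i\<in>{0..k}. C i \<in> {0, 1}"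
  shows "int (card (seq_opt_set (\<lambda>i. 1 - C i) k n ps))
           = int n - int (card (seq_opt_set C k n ps))"
proof -
  have "card (seq_opt_set C k n ps) \<le> n"
    using card_mono[OF finite_atLeastAtMost seq_opt_set_subset] by simp
  moreover have "card (seq_opt_set (\<lambda>i. 1 - C i) k n ps) = n - card (seq_opt_set C k n ps)"
    unfolding seq_opt_set_compl[OF assms]
    using card_Diff_subset[OF finite_subset[OF seq_opt_set_subset] seq_opt_set_subset] by simp
  ultimately show ?thesis by simp
qed

lemma O_count_compl:
  assumes "\<forall>i\<in>{0..k}. C i \<in> {0, 1}"
  shows "O_count C k n m = O_count (\<lambda>i. 1 - C i) k n (int n - m)"
  unfolding O_count_def card_seq_opt_set_compl[OF assms] by auto

theorem lemma3p1:
  fixes k n :: nat and C :: "nat \<Rightarrow> nat"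
  assumes "k \<ge> 1" and "n \<ge> 1"
    and "\<forall>i\<in>{0..k}. C i \<in> {0, 1}"
  defines "C' \<equiv> (\<lambda>i. 1 - C i)"
  shows "(\<forall>m::int. int (C k) - 1 \<le> m \<and> m \<le> int n + int (C k) \<longrightarrow>
            O_count C k n m = O_count C' k n (int n - m))
       \<and> (\<forall>m::int. 0 \<le> m \<and> m \<le> int n + 1 \<longrightarrow>
            O_count C k n (m + int (C k) - 1) = O_count C' k n (int n - m + int (C' k)))"
proof -
  have compl: "O_count C k n m = O_count C' k n (int n - m)" for m
    unfolding C'_def by (rule O_count_compl[OF assms(3)])
  have "C k \<in> {0, 1}"
    using assms(3) by auto
  then have shift: "int n - (m + int (C k) - 1) = int n - m + int (C' k)" for m
    unfolding C'_def by auto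
  show ?thesis
    using compl shift by metis
qed

end
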